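(* Let $f:\mathbb{R}^d\to\mathbb{R}$ be $C^3$, $1\le k\le d-1$, $\mathbf{x}^*$ a critical point of $f$, and suppose there exist $\delta>0$, $L>\mu>0$, $M>0$ such that for all $\mathbf{x}$ with $\|\mathbf{x}-\mathbf{x}^*\|_2\le\delta$ the eigenvalues of $\nabla^2 f(\mathbf{x})$ satisfy $-L<\lambda_1\le\dots\le\lambda_k<-\mu<0<\mu<\lambda_{k+1}\le\dots\le\lambda_d<L$ and $\nabla^2 f$ is $M$-Lipschitz on that ball. Let $\theta>0$ be small enough that $C(\theta):=(1-\sqrt{\theta})\mu-L\theta-5L\sqrt{\theta}>0$, let $\alpha(n)<\frac{1}{2\mu}$, and let $U=\{\mathbf{x}:\|\mathbf{x}-\mathbf{x}^*\|_2\le\min(C(\theta)/M,\delta)\}$. Consider $\mathbf{x}(n+1)=\mathbf{x}(n)-\alpha(n)\mathcal{P}_{\tilde V}\nabla f(\mathbf{x}(n);\omega(n))$ with $\mathcal{P}_{\tilde V}=I-2\sum_{i=1}^k\tilde{\mathbf{v}}_i\tilde{\mathbf{v}}_i^\top$, where $\tilde{\mathbf{v}}_1,\dots,\tilde{\mathbf{v}}_k$ are orthonormal with $\|\sum_{i=1}^k\tilde{\mathbf{v}}_i\tilde{\mathbf{v}}_i^\top-\sum_{i=1}^k\mathbf{v}_i\mathbf{v}_i^\top\|_2^2\le\theta$, $\mathbf{v}_1,\dots,\mathbf{v}_k$ being orthonormal eigenvectors of $\nabla^2 f(\mathbf{x}(n))$ for its $k$ smallest eigenvalues. If $\mathbf{x}(n)\in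 U$, then $$\tfrac12\|\mathbf{x}(n+1)-\mathbf{x}^*\|_2^2\le(1-\alpha(n)C(\theta))\tfrac12\|\mathbf{x}(n)-\mathbf{x}^*\|_2^2+\alpha(n)\psi(n)+\tfrac12\alpha(n)^2\|\nabla f(\mathbf{x}(n);\omega(n))\|_2^2,$$ where $\psi(n)=-\langle\mathcal{P}_{\tilde V}(\nabla f(\mathbf{x}(n);\omega(n))-\nabla f(\mathbf{x}(n))),\mathbf{x}(n)-\mathbf{x}^*\rangle$ is a martingale difference sequence with zero (conditional) expectation.
   Context: $\nabla f(\mathbf{x};\omega)$ is a stochastic gradient with $\omega$ from a probability space satisfying $\mathbb{E}\,\nabla f(\mathbf{x};\omega)=\nabla f(\mathbf{x})$; $\omega(n)$ is a fresh sample independent of the past iterates and of the vectors $\tilde{\mathbf{v}}_i$ used at step $n$. *)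

theory Defs
  imports "HOL-Analysis.Analysis" "HOL-Probability.Probability"
begin

definition outer :: "real^'n \<Rightarrow> real^'n \<Rightarrow> real^'n^'n" where
  "outer u v = (\<chi> i j. u$i * v$j)"

definition opnorm :: "real^'n^'m \<Rightarrow> real" where
  "opnorm A = onorm (\<lambda>x. A *v x)"

definition orthonormal_family :: "nat \<Rightarrow> (nat \<Rightarrow> real^'n) \<Rightarrow> bool" where
  "orthonormal_family m u \<longleftrightarrow>
     (\<forall>i<m. \<forall>j<m. u i \<bullet> u j = (if i = j then 1 else 0))"

text \<open>lam 0 <= ... <= lam (d-1) are the eigenvalues of A (with multiplicity),
  u 0, ..., u (d-1) a corresponding orthonormal eigenbasis, d = CARD('n).\<close>
definition sorted_eigensystem :: "real^'n^'n \<Rightarrow> (nat \<Rightarrow> real) \<Rightarrow> (nat \<Rightarrow> real^'n) \<Rightarrow> bool" where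
  "sorted_eigensystem A lam u \<longleftrightarrow>
     orthonormal_family CARD('n) u \<and>
     (\<forall>i<CARD('n). A *v u i = lam i *\<^sub>R u i) \<and>
     (\<forall>i j. i \<le> j \<and> j < CARD('n) \<longrightarrow> lam i \<le> lam j)"

definition reflector :: "nat \<Rightarrow> (nat \<Rightarrow> real^'n) \<Rightarrow> real^'n^'n" where
  "reflector k vt = mat 1 - 2 *\<^sub>R (\<Sum>i<k. outer (vt i) (vt i))"

definition Cth :: "real \<Rightarrow> real \<Rightarrow> real \<Rightarrow> real" where
  "Cth \<mu> L \<theta> = (1 - sqrt \<theta>) * \<mu> - L * \<theta> - 5 * L * sqrt \<theta>"

end

theory Submission
  imports Defs
begin

text \<open>Write \<open>e = x(n) - x\<^sup>*\<close>, \<open>H = \<nabla>\<^sup>2f(x(n))\<close>, \<open>g = \<nabla>f(x(n);\<omega>(n))\<close> and \<open>P = P\<^sub>V\<^sub>t\<close> for the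
  approximate reflector. Since \<open>P\<close> is an isometry, expanding \<open>|e - \<alpha> P g|\<^sup>2\<close> reduces the
  inequality to \<open>\<langle>P \<nabla>f(x(n)), e\<rangle> \<ge> C(\<theta>)/2 |e|\<^sup>2\<close>, and \<open>\<psi>(n)\<close> is a linear functional of the
  centred noise \<open>g - \<nabla>f(x(n))\<close>. As \<open>\<nabla>f(x\<^sup>*) = 0\<close> and \<open>\<nabla>\<^sup>2f\<close> is \<open>M\<close>-Lipschitz,
  \<open>\<nabla>f(x(n)) = H e + r\<close> with \<open>|r| \<le> M/2 |e|\<^sup>2 \<le> C(\<theta>)/2 |e|\<close> on \<open>U\<close>. For the exact
  eigenvectors \<open>P\<^sub>V H = |H| \<ge> \<mu>\<close>, and \<open>|P - P\<^sub>V| \<le> 2\<surd>\<theta>\<close>, \<open>|H| \<le> L\<close> give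
  \<open>\<langle>P H e, e\<rangle> \<ge> (\<mu> - 2\<surd>\<theta> L) |e|\<^sup>2 \<ge> C(\<theta>) |e|\<^sup>2\<close>. The spectral hypothesis speaks about some
  sorted eigensystem of \<open>H\<close>; sorted eigenvalues are unique by a Courant--Fischer dimension
  count, so it applies to the one containing the \<open>v\<^sub>i\<close>.\<close>

lemma outer_mult_vec: "outer u w *v y = (w \<bullet> y) *\<^sub>R u"
  by (simp add: vec_eq_iff outer_def matrix_vector_mult_def inner_vec_def sum_distrib_left mult_ac)

lemma sum_matrix_vector_mult: "(\<Sum>i\<in>S. A i) *v (y::real^'n) = (\<Sum>i\<in>S. A i *v y)"
proof (induction S rule: infinite_finite_induct)
  case (insert x F) then show ?case by (simp add: matrix_vector_mult_add_rdistrib)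
qed auto

lemma norm_matrix_vector_mult_le_opnorm: "norm ((A::real^'n^'m) *v x) \<le> opnorm A * norm x"
  unfolding opnorm_def by (rule onorm) simp

lemma opnorm_nonneg: "0 \<le> opnorm (A::real^'n^'m)"
  unfolding opnorm_def by (rule onorm_pos_le) simp

lemma orthonormal_family_inner_sum:
  assumes "orthonormal_family m u" "j < m"
  shows "u j \<bullet> (\<Sum>i<m. a i *\<^sub>R u i) = a j"
proof -
  have "u j \<bullet> (\<Sum>i<m. a i *\<^sub>R u i) = (\<Sum>i<m. a i * (u j \<bullet> u i))"
    by (simp add: inner_sum_right)
  also have "\<dots> = (\<Sum>i<m. if i = j then a i else 0)"
    using assms by (intro sum.cong) (auto simp: orthonormal_family_def)
  also have "\<dots> = a j" using assms by simp
  finally show ?thesis .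
qed

lemma orthonormal_family_norm_sum:
  assumes "orthonormal_family m u"
  shows "(norm (\<Sum>i<m. a i *\<^sub>R u i))\<^sup>2 = (\<Sum>i<m. (a i)\<^sup>2)"
proof -
  have "(norm (\<Sum>i<m. a i *\<^sub>R u i))\<^sup>2 = (\<Sum>j<m. a j * (u j \<bullet> (\<Sum>i<m. a i *\<^sub>R u i)))"
    by (simp add: power2_norm_eq_inner inner_sum_left)
  also have "\<dots> = (\<Sum>j<m. (a j)\<^sup>2)"
    using orthonormal_family_inner_sum[OF assms] by (simp add: power2_eq_square)
  finally show ?thesis .
qed

lemma orthonormal_family_span:
  fixes u :: "nat \<Rightarrow> real^'n"
  assumes "orthonormal_family CARD('n) u"
  shows "span (u ` {..<CARD('n)}) = UNIV"
proof -
  have uu: "u i \<bullet> u j = (if i = j then 1 else 0)" if "i < CARD('n)" "j < CARD('n)" for i j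
    using assms that by (simp add: orthonormal_family_def)
  have "inj_on u {..<CARD('n)}"
    by (rule inj_onI) (metis lessThan_iff uu zero_neq_one)
  then have "dim (UNIV :: (real^'n) set) \<le> card (u ` {..<CARD('n)})"
    by (simp add: card_image)
  moreover have "independent (u ` {..<CARD('n)})"
  proof (rule pairwise_orthogonal_independent)
    show "pairwise orthogonal (u ` {..<CARD('n)})"
      by (auto simp: pairwise_def orthogonal_def uu)
    show "0 \<notin> u ` {..<CARD('n)}"
      using uu[of i i for i] by force
  qed
  ultimately show ?thesis
    using card_ge_dim_independent[of _ UNIV] by blast
qed

lemma orthonormal_family_expansion:
  fixes u :: "nat \<Rightarrow> real^'n"
  assumes "orthonormal_family CARD('n) u"
  shows "x = (\<Sum>i<CARD('n). (x \<bullet> u i) *\<^sub>R u i)"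
proof -
  define y where "y = x - (\<Sum>i<CARD('n). (x \<bullet> u i) *\<^sub>R u i)"
  have orth: "orthogonal y (u j)" if "j < CARD('n)" for j
    using orthonormal_family_inner_sum[OF assms that, of "\<lambda>i. x \<bullet> u i"]
    by (simp add: y_def orthogonal_def inner_diff_left inner_diff_right inner_commute)
  have "y \<in> span (u ` {..<CARD('n)})"
    using orthonormal_family_span[OF assms] by simp
  then have "orthogonal y y"
    by (rule orthogonal_to_span) (use orth in auto)
  then have "y = 0"
    by (simp add: orthogonal_self)
  then show ?thesis by (simp add: y_def)
qed

lemma orthonormal_family_norm_expansion:
  fixes u :: "nat \<Rightarrow> real^'n"
  assumes "orthonormal_family CARD('n) u"
  shows "(norm x)\<^sup>2 = (\<Sum>i<CARD('n). (x \<bullet> u i)\<^sup>2)"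
  by (subst orthonormal_family_expansion[OF assms, of x]) (rule orthonormal_family_norm_sum[OF assms])

lemma reflector_mult_vec: "reflector k u *v y = y - 2 *\<^sub>R (\<Sum>i<k. (u i \<bullet> y) *\<^sub>R u i)"
  by (simp add: reflector_def matrix_vector_mult_diff_rdistrib sum_matrix_vector_mult outer_mult_vec
       scaleR_matrix_vector_assoc[symmetric])

lemma reflector_norm:
  assumes "orthonormal_family k u"
  shows "norm (reflector k u *v y) = norm y"
proof -
  define s where "s = (\<Sum>i<k. (u i \<bullet> y) *\<^sub>R u i)"
  have ys: "y \<bullet> s = (\<Sum>i<k. (u i \<bullet> y)\<^sup>2)"
    by (simp add: s_def inner_sum_right power2_eq_square inner_commute)
  have ss: "s \<bullet> s = (\<Sum>i<k. (u i \<bullet> y)\<^sup>2)"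
    using orthonormal_family_norm_sum[OF assms, of "\<lambda>i. u i \<bullet> y"]
    by (simp add: s_def power2_norm_eq_inner)
  have "(norm (reflector k u *v y))\<^sup>2 = (y - 2 *\<^sub>R s) \<bullet> (y - 2 *\<^sub>R s)"
    by (simp add: reflector_mult_vec s_def power2_norm_eq_inner)
  also have "\<dots> = y \<bullet> y - 4 * (y \<bullet> s) + 4 * (s \<bullet> s)"
    by (simp add: inner_diff_left inner_diff_right inner_commute[of s y])
  also have "\<dots> = (norm y)\<^sup>2" using ys ss by (simp add: power2_norm_eq_inner)
  finally show ?thesis by (simp add: power2_eq_iff_nonneg)
qed

lemma reflector_mult_family_member:
  assumes "orthonormal_family m u" "k \<le> m" "j < m"
  shows "reflector k u *v u j = (if j < k then - u j else u j)"
proof -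
  have "(\<Sum>i<k. (u i \<bullet> u j) *\<^sub>R u i) = (\<Sum>i<k. if i = j then u j else 0)"
    using assms by (intro sum.cong) (auto simp: orthonormal_family_def)
  then show ?thesis by (simp add: reflector_mult_vec scaleR_2)
qed

lemma reflector_diff_mult_vec_le:
  "norm ((reflector k u - reflector k w) *v z)
     \<le> 2 * opnorm ((\<Sum>i<k. outer (u i) (u i)) - (\<Sum>i<k. outer (w i) (w i))) * norm z"
proof -
  define D where "D = (\<Sum>i<k. outer (u i) (u i)) - (\<Sum>i<k. outer (w i) (w i))"
  have "reflector k u - reflector k w = (-2) *\<^sub>R D"
    by (simp add: reflector_def D_def algebra_simps)
  then have "(reflector k u - reflector k w) *v z = (-2) *\<^sub>R (D *v z)"
    by (simp add: scaleR_matrix_vector_assoc)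
  then show ?thesis
    using norm_matrix_vector_mult_le_opnorm[of D z] by (simp add: D_def)
qed

subsection \<open>Orthonormal eigenbases\<close>

lemma eigenbasis_mult_vec:
  fixes u :: "nat \<Rightarrow> real^'n"
  assumes "orthonormal_family CARD('n) u"
    and "\<forall>i<CARD('n). A *v u i = lam i *\<^sub>R u i"
  shows "A *v x = (\<Sum>i<CARD('n). (lam i * (x \<bullet> u i)) *\<^sub>R u i)"
proof -
  have "A *v x = A *v (\<Sum>i<CARD('n). (x \<bullet> u i) *\<^sub>R u i)"
    by (subst orthonormal_family_expansion[OF assms(1), of x]) simp
  also have "\<dots> = (\<Sum>i<CARD('n). (lam i * (x \<bullet> u i)) *\<^sub>R u i)"
    using assms(2) by (simp add: linear_sum[OF matrix_vector_mul_linear] matrix_vector_mult_scaleR mult_ac)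
  finally show ?thesis .
qed

lemma eigenbasis_quadratic_form:
  fixes u :: "nat \<Rightarrow> real^'n"
  assumes "orthonormal_family CARD('n) u"
    and "\<forall>i<CARD('n). A *v u i = lam i *\<^sub>R u i"
  shows "x \<bullet> (A *v x) = (\<Sum>i<CARD('n). lam i * (x \<bullet> u i)\<^sup>2)"
  by (simp add: eigenbasis_mult_vec[OF assms] inner_sum_right power2_eq_square mult_ac)

lemma eigenbasis_quadratic_form_ge:
  fixes u :: "nat \<Rightarrow> real^'n"
  assumes "orthonormal_family CARD('n) u"
    and "\<forall>i<CARD('n). A *v u i = lam i *\<^sub>R u i"
    and "\<And>i. i < CARD('n) \<Longrightarrow> x \<bullet> u i \<noteq> 0 \<Longrightarrow> m \<le> lam i"
  shows "m * (norm x)\<^sup>2 \<le> x \<bullet> (A *v x)"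
proof -
  have "m * (norm x)\<^sup>2 = (\<Sum>i<CARD('n). m * (x \<bullet> u i)\<^sup>2)"
    by (simp add: orthonormal_family_norm_expansion[OF assms(1)] sum_distrib_left)
  also have "\<dots> \<le> (\<Sum>i<CARD('n). lam i * (x \<bullet> u i)\<^sup>2)"
  proof (rule sum_mono)
    fix i assume "i \<in> {..<CARD('n)}"
    then show "m * (x \<bullet> u i)\<^sup>2 \<le> lam i * (x \<bullet> u i)\<^sup>2"
      using assms(3) by (cases "x \<bullet> u i = 0") (auto intro: mult_right_mono)
  qed
  finally show ?thesis by (simp add: eigenbasis_quadratic_form[OF assms(1,2)])
qed

lemma eigenbasis_quadratic_form_less:
  fixes u :: "nat \<Rightarrow> real^'n"
  assumes "orthonormal_family CARD('n) u"
    and "\<forall>i<CARD('n). A *v u i = lam i *\<^sub>R u i"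
    and "x \<noteq> 0"
    and "\<And>i. i < CARD('n) \<Longrightarrow> x \<bullet> u i \<noteq> 0 \<Longrightarrow> lam i < m"
  shows "x \<bullet> (A *v x) < m * (norm x)\<^sup>2"
proof -
  have "\<exists>j<CARD('n). x \<bullet> u j \<noteq> 0"
  proof (rule ccontr)
    assume "\<not> ?thesis"
    then have "(\<Sum>i<CARD('n). (x \<bullet> u i)\<^sup>2) = 0"
      by simp
    then show False
      using assms(3) by (simp add: orthonormal_family_norm_expansion[OF assms(1), symmetric])
  qed
  then obtain j where j: "j < CARD('n)" "x \<bullet> u j \<noteq> 0"
    by blast
  have "x \<bullet> (A *v x) = (\<Sum>i<CARD('n). lam i * (x \<bullet> u i)\<^sup>2)"
    by (rule eigenbasis_quadratic_form[OF assms(1,2)])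
  also have "\<dots> < (\<Sum>i<CARD('n). m * (x \<bullet> u i)\<^sup>2)"
  proof (rule sum_strict_mono_ex1)
    show "\<forall>i\<in>{..<CARD('n)}. lam i * (x \<bullet> u i)\<^sup>2 \<le> m * (x \<bullet> u i)\<^sup>2"
    proof
      fix i assume "i \<in> {..<CARD('n)}"
      then show "lam i * (x \<bullet> u i)\<^sup>2 \<le> m * (x \<bullet> u i)\<^sup>2"
        using assms(4) by (cases "x \<bullet> u i = 0") (auto intro: mult_right_mono less_imp_le)
    qed
    show "\<exists>i\<in>{..<CARD('n)}. lam i * (x \<bullet> u i)\<^sup>2 < m * (x \<bullet> u i)\<^sup>2"
      using j assms(4) by (intro bexI[of _ j]) auto
  qed simp
  also have "\<dots> = m * (norm x)\<^sup>2"
    by (simp add: orthonormal_family_norm_expansion[OF assms(1)] sum_distrib_left)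
  finally show ?thesis .
qed

lemma eigenbasis_norm_mult_vec_le:
  fixes u :: "nat \<Rightarrow> real^'n"
  assumes "orthonormal_family CARD('n) u"
    and "\<forall>i<CARD('n). A *v u i = lam i *\<^sub>R u i"
    and bound: "\<forall>i<CARD('n). \<bar>lam i\<bar> \<le> L"
  shows "norm (A *v x) \<le> L * norm x"
proof -
  have sq_le: "(lam i)\<^sup>2 \<le> L\<^sup>2" if "i < CARD('n)" for i
    using power_mono[OF bound[rule_format, OF that] abs_ge_zero, of 2] by simp
  have "\<bar>lam 0\<bar> \<le> L"
    using bound by simp
  then have "0 \<le> L"
    using abs_ge_zero[of "lam 0"] by linarith
  have "(norm (A *v x))\<^sup>2 = (\<Sum>i<CARD('n). (lam i)\<^sup>2 * (x \<bullet> u i)\<^sup>2)"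
    by (simp add: eigenbasis_mult_vec[OF assms(1,2)] orthonormal_family_norm_sum[OF assms(1)]
        power_mult_distrib)
  also have "\<dots> \<le> (\<Sum>i<CARD('n). L\<^sup>2 * (x \<bullet> u i)\<^sup>2)"
    using sq_le by (intro sum_mono mult_right_mono) auto
  also have "\<dots> = (L * norm x)\<^sup>2"
    by (simp add: orthonormal_family_norm_expansion[OF assms(1), of x] sum_distrib_left
        power_mult_distrib)
  finally show ?thesis
    by (rule power2_le_imp_le) (use \<open>0 \<le> L\<close> in simp)
qed

text \<open>Courant--Fischer in its simplest form: a nonzero vector orthogonal to all eigenvectors
  outside \<open>I\<close> and \<open>J\<close> would have a Rayleigh quotient both \<open>\<ge> m\<close> and \<open>< m\<close>.\<close>
lemma eigenbases_card_ge_plus_card_less_le: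
  fixes u u' :: "nat \<Rightarrow> real^'n"
  assumes on: "orthonormal_family CARD('n) u"
    and ev: "\<forall>i<CARD('n). A *v u i = lam i *\<^sub>R u i"
    and on': "orthonormal_family CARD('n) u'"
    and ev': "\<forall>i<CARD('n). A *v u' i = lam' i *\<^sub>R u' i"
    and I: "I \<subseteq> {..<CARD('n)}" and J: "J \<subseteq> {..<CARD('n)}"
    and ge: "\<forall>i\<in>I. m \<le> lam i" and less: "\<forall>j\<in>J. lam' j < m"
  shows "card I + card J \<le> CARD('n)"
proof (rule ccontr)
  assume card_gt: "\<not> card I + card J \<le> CARD('n)"
  define W where "W = u ` ({..<CARD('n)} - I) \<union> u' ` ({..<CARD('n)} - J)"
  have "card W \<le> card ({..<CARD('n)} - I) + card ({..<CARD('n)} - J)"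
    unfolding W_def by (rule order_trans[OF card_Un_le]) (intro add_mono card_image_le; simp)
  also have "\<dots> = (CARD('n) - card I) + (CARD('n) - card J)"
    using I J by (simp add: card_Diff_subset finite_subset)
  finally have "dim W < DIM(real^'n)"
    using card_gt card_mono[OF _ I] card_mono[OF _ J] dim_le_card[OF span_superset, of W]
    by (simp add: W_def)
  then obtain x :: "real^'n" where "x \<noteq> 0" and x_orth: "\<And>y. y \<in> span W \<Longrightarrow> orthogonal x y"
    using orthogonal_to_subspace_exists by blast
  have "x \<bullet> u i = 0" if "i < CARD('n)" "i \<notin> I" for i
    using x_orth[of "u i"] that by (auto simp: W_def orthogonal_def intro: span_base)
  then have "m * (norm x)\<^sup>2 \<le> x \<bullet> (A *v x)"
    using ge by (intro eigenbasis_quadratic_form_ge[OF on ev]) blast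
  moreover have "x \<bullet> u' j = 0" if "j < CARD('n)" "j \<notin> J" for j
    using x_orth[of "u' j"] that by (auto simp: W_def orthogonal_def intro: span_base)
  then have "x \<bullet> (A *v x) < m * (norm x)\<^sup>2"
    using less \<open>x \<noteq> 0\<close> by (intro eigenbasis_quadratic_form_less[OF on' ev']) blast+
  ultimately show False by simp
qed

lemma sorted_eigensystem_eigenvalues_unique:
  fixes A :: "real^'n^'n"
  assumes "sorted_eigensystem A lam u" "sorted_eigensystem A lam' u'" "j < CARD('n)"
  shows "lam j = lam' j"
proof -
  have "lam' j \<le> lam j"
    if sys: "sorted_eigensystem A lam u" and sys': "sorted_eigensystem A lam' u'"
    for lam lam' u u'
  proof (rule ccontr)
    assume "\<not> lam' j \<le> lam j"
    have "card {j..<CARD('n)} + card {..j} \<le> CARD('n)"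
    proof (rule eigenbases_card_ge_plus_card_less_le
        [where u = u' and lam = lam' and u' = u and lam' = lam and m = "lam' j"])
      show "\<forall>i\<in>{j..<CARD('n)}. lam' j \<le> lam' i"
        using sys' by (auto simp: sorted_eigensystem_def)
      show "\<forall>i\<in>{..j}. lam i < lam' j"
        using sys \<open>\<not> lam' j \<le> lam j\<close> \<open>j < CARD('n)\<close>
        by (fastforce simp: sorted_eigensystem_def)
    qed (use sys sys' \<open>j < CARD('n)\<close> in \<open>auto simp: sorted_eigensystem_def\<close>)
    then show False using \<open>j < CARD('n)\<close> by simp
  qed
  from this[OF assms(1,2)] this[OF assms(2,1)] show ?thesis by simp
qed

text \<open>Reflecting exactly the eigenvectors of the negative eigenvalues turns \<open>A\<close> into \<open>|A|\<close>.\<close>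
lemma eigenbasis_reflector_quadratic_form_ge:
  fixes u :: "nat \<Rightarrow> real^'n"
  assumes on: "orthonormal_family CARD('n) u"
    and ev: "\<forall>i<CARD('n). A *v u i = lam i *\<^sub>R u i"
    and k: "k \<le> CARD('n)"
    and sign: "\<forall>i<CARD('n). lam i < 0 \<longleftrightarrow> i < k"
    and gap: "\<forall>i<CARD('n). \<mu> \<le> \<bar>lam i\<bar>"
  shows "\<mu> * (norm x)\<^sup>2 \<le> x \<bullet> (reflector k u *v (A *v x))"
proof -
  have "\<forall>i<CARD('n). (reflector k u ** A) *v u i = \<bar>lam i\<bar> *\<^sub>R u i"
  proof (intro allI impI)
    fix i assume "i < CARD('n)"
    then show "(reflector k u ** A) *v u i = \<bar>lam i\<bar> *\<^sub>R u i"
      using ev sign reflector_mult_family_member[OF on k]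
      by (auto simp: matrix_vector_mul_assoc[symmetric] matrix_vector_mult_scaleR abs_if)
  qed
  then have "\<mu> * (norm x)\<^sup>2 \<le> x \<bullet> ((reflector k u ** A) *v x)"
    using gap by (intro eigenbasis_quadratic_form_ge[OF on, where lam = "\<lambda>i. \<bar>lam i\<bar>"]) auto
  then show ?thesis
    by (simp add: matrix_vector_mul_assoc)
qed

lemma approximate_reflector_quadratic_form_ge:
  fixes u v vt :: "nat \<Rightarrow> real^'n"
  assumes on: "orthonormal_family CARD('n) u"
    and ev: "\<forall>i<CARD('n). A *v u i = lam i *\<^sub>R u i"
    and vu: "\<forall>i<k. v i = u i" and k: "k \<le> CARD('n)"
    and sign: "\<forall>i<CARD('n). lam i < 0 \<longleftrightarrow> i < k"
    and gap: "\<forall>i<CARD('n). \<mu> \<le> \<bar>lam i\<bar> \<and> \<bar>lam i\<bar> \<le> L"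
    and close: "opnorm ((\<Sum>i<k. outer (vt i) (vt i)) - (\<Sum>i<k. outer (v i) (v i))) \<le> s"
  shows "(\<mu> - 2 * s * L) * (norm x)\<^sup>2 \<le> x \<bullet> (reflector k vt *v (A *v x))"
proof -
  have "reflector k v = reflector k u"
    using vu by (simp add: reflector_def)
  then have exact: "\<mu> * (norm x)\<^sup>2 \<le> x \<bullet> (reflector k v *v (A *v x))"
    using eigenbasis_reflector_quadratic_form_ge[OF on ev k sign] gap by simp
  have "0 \<le> s"
    by (rule order_trans[OF opnorm_nonneg close])
  have bound: "\<forall>i<CARD('n). \<bar>lam i\<bar> \<le> L"
    using gap by blast
  have "\<bar>x \<bullet> ((reflector k vt - reflector k v) *v (A *v x))\<bar>
      \<le> norm x * norm ((reflector k vt - reflector k v) *v (A *v x))"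
    by (rule Cauchy_Schwarz_ineq2)
  also have "\<dots> \<le> norm x * (2 * s * norm (A *v x))"
    by (intro mult_left_mono order_trans[OF reflector_diff_mult_vec_le] mult_right_mono)
      (use close in auto)
  also have "\<dots> \<le> norm x * (2 * s * (L * norm x))"
    using eigenbasis_norm_mult_vec_le[OF on ev bound] \<open>0 \<le> s\<close>
    by (intro mult_left_mono) auto
  finally show ?thesis
    using exact by (simp add: matrix_vector_mult_diff_rdistrib inner_diff_right power2_eq_square
        algebra_simps)
qed

subsection \<open>Taylor remainder of the gradient\<close>

text \<open>With \<open>r\<close> the remainder, \<open>\<phi> t = r \<bullet> (grad (a + t (b - a)) - t H\<^sub>b (b - a))\<close> has
  derivative at most \<open>K |r| |b - a|\<^sup>2 (1 - t)\<close>; comparing \<open>\<phi> 1 - \<phi> 0 = |r|\<^sup>2\<close> with the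
  integral of this bound gives \<open>|r|\<^sup>2 \<le> K/2 |r| |b - a|\<^sup>2\<close>.\<close>
lemma gradient_taylor_remainder_le:
  fixes grad :: "real^'n \<Rightarrow> real^'n" and hess :: "real^'n \<Rightarrow> real^'n^'n"
  assumes deriv: "\<And>x. x \<in> S \<Longrightarrow> (grad has_derivative (\<lambda>h. hess x *v h)) (at x)"
    and lip: "\<And>x y. x \<in> S \<Longrightarrow> y \<in> S \<Longrightarrow> opnorm (hess x - hess y) \<le> K * norm (x - y)"
    and S: "convex S" "a \<in> S" "b \<in> S"
  shows "norm (grad b - grad a - hess b *v (b - a)) \<le> K / 2 * (norm (b - a))\<^sup>2"
proof -
  define e where "e = b - a"
  define r where "r = grad b - grad a - hess b *v e"
  define c where "c = K * norm r * (norm e)\<^sup>2"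
  define h where "h = (\<lambda>t. r \<bullet> (grad (a + t *\<^sub>R e) - t *\<^sub>R (hess b *v e)) - c * (t - t\<^sup>2 / 2))"
  have seg: "a + t *\<^sub>R e \<in> S" if "0 \<le> t" "t \<le> 1" for t
  proof -
    have "a + t *\<^sub>R e \<in> closed_segment a b"
      using that by (auto simp: closed_segment_def e_def algebra_simps intro!: exI[of _ t])
    then show ?thesis
      using closed_segment_subset[OF S(2,3,1)] by blast
  qed
  have "h 1 \<le> h 0"
  proof (rule DERIV_nonpos_imp_nonincreasing[of 0 1 h])
    fix t :: real assume t: "0 \<le> t" "t \<le> 1"
    define D where "D = r \<bullet> ((hess (a + t *\<^sub>R e) - hess b) *v e)"
    have "((\<lambda>t. a + t *\<^sub>R e) has_derivative (\<lambda>h. h *\<^sub>R e)) (at t)"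
      by (auto intro!: derivative_eq_intros)
    from has_derivative_compose[OF this deriv[OF seg[OF t]]]
    have "((\<lambda>t. r \<bullet> (grad (a + t *\<^sub>R e) - t *\<^sub>R (hess b *v e))) has_derivative (\<lambda>h. D * h)) (at t)"
      by (auto intro!: derivative_eq_intros simp: D_def matrix_vector_mult_scaleR
          matrix_vector_mult_diff_rdistrib inner_diff_right algebra_simps)
    then have "((\<lambda>t. r \<bullet> (grad (a + t *\<^sub>R e) - t *\<^sub>R (hess b *v e))) has_real_derivative D) (at t)"
      by (simp add: has_field_derivative_def)
    moreover have "((\<lambda>t. c * (t - t\<^sup>2 / 2)) has_real_derivative c * (1 - t)) (at t)"
      by (auto intro!: derivative_eq_intros)
    ultimately have deriv: "(h has_real_derivative D - c * (1 - t)) (at t)"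
      unfolding h_def by (rule DERIV_diff)
    have "norm (a + t *\<^sub>R e - b) = (1 - t) * norm e"
    proof -
      have "a + t *\<^sub>R e - b = (t - 1) *\<^sub>R e"
        by (simp add: e_def algebra_simps)
      then show ?thesis
        using t by (simp add: abs_if)
    qed
    then have hess_diff: "opnorm (hess (a + t *\<^sub>R e) - hess b) \<le> K * ((1 - t) * norm e)"
      using lip[OF seg[OF t] S(3)] by simp
    have "D \<le> norm r * (opnorm (hess (a + t *\<^sub>R e) - hess b) * norm e)"
      unfolding D_def
      by (rule order_trans[OF norm_cauchy_schwarz mult_left_mono[OF norm_matrix_vector_mult_le_opnorm]])
        simp
    also have "\<dots> \<le> norm r * (K * ((1 - t) * norm e) * norm e)"
      using hess_diff by (intro mult_left_mono mult_right_mono) auto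
    also have "\<dots> = c * (1 - t)"
      by (simp add: c_def power2_eq_square algebra_simps)
    finally show "\<exists>y. (h has_real_derivative y) (at t) \<and> y \<le> 0"
      using deriv by (intro exI[of _ "D - c * (1 - t)"]) auto
  qed simp
  moreover have "(norm r)\<^sup>2 = r \<bullet> (grad b - hess b *v e) - r \<bullet> grad a"
  proof -
    have "r = (grad b - hess b *v e) - grad a"
      by (simp add: r_def)
    then show ?thesis
      by (metis inner_diff_right power2_norm_eq_inner)
  qed
  ultimately have sq: "(norm r)\<^sup>2 \<le> (K / 2 * (norm e)\<^sup>2) * norm r"
    by (simp add: h_def e_def c_def algebra_simps)
  have "0 \<le> K * norm e"
    using lip[OF S(2,3)] opnorm_nonneg[of "hess a - hess b"] by (simp add: e_def norm_minus_commute)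
  then have "0 \<le> K / 2 * (norm e)\<^sup>2"
    using mult_nonneg_nonneg[OF _ norm_ge_zero, of "K * norm e" e]
    by (simp add: power2_eq_square mult.assoc)
  then have "norm r \<le> K / 2 * (norm e)\<^sup>2"
    using sq by (cases "r = 0") (auto simp: power2_eq_square mult_le_cancel_right_pos)
  then show ?thesis
    by (simp add: r_def e_def)
qed

subsection \<open>One step of the reflected stochastic gradient method\<close>

lemma isometry_gradient_correlation_ge:
  fixes P A :: "real^'n^'n"
  assumes iso: "\<And>y. norm (P *v y) = norm y"
    and taylor: "norm (g - A *v e) \<le> K / 2 * (norm e)\<^sup>2"
    and small: "K * norm e \<le> C"
    and coercive: "c * (norm e)\<^sup>2 \<le> e \<bullet> (P *v (A *v e))"
    and "C \<le> c"
  shows "C / 2 * (norm e)\<^sup>2 \<le> (P *v g) \<bullet> e"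
proof -
  have "\<bar>(P *v (g - A *v e)) \<bullet> e\<bar> \<le> norm (g - A *v e) * norm e"
    using Cauchy_Schwarz_ineq2[of "P *v (g - A *v e)" e] iso by simp
  also have "\<dots> \<le> K / 2 * (norm e)\<^sup>2 * norm e"
    by (rule mult_right_mono[OF taylor norm_ge_zero])
  also have "\<dots> = (K * norm e) / 2 * (norm e)\<^sup>2"
    by (simp add: power2_eq_square)
  also have "\<dots> \<le> C / 2 * (norm e)\<^sup>2"
    using small by (simp add: mult_right_mono)
  finally have remainder: "- (C / 2 * (norm e)\<^sup>2) \<le> (P *v (g - A *v e)) \<bullet> e"
    by linarith
  have "C * (norm e)\<^sup>2 \<le> c * (norm e)\<^sup>2"
    using \<open>C \<le> c\<close> by (simp add: mult_right_mono)
  moreover have "(P *v g) \<bullet> e = (P *v (g - A *v e)) \<bullet> e + e \<bullet> (P *v (A *v e))"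
    by (simp add: matrix_vector_mult_diff_distrib inner_diff_left inner_diff_right inner_commute)
  ultimately show ?thesis
    using remainder coercive by linarith
qed

lemma half_sq_norm_isometry_step_le:
  fixes P :: "real^'n^'n"
  assumes iso: "\<And>y. norm (P *v y) = norm y"
    and corr: "C / 2 * (norm (x - x0))\<^sup>2 \<le> (P *v g0) \<bullet> (x - x0)"
    and "0 \<le> \<alpha>"
  shows "(1/2) * (norm ((x - \<alpha> *\<^sub>R (P *v g)) - x0))\<^sup>2
    \<le> (1 - \<alpha> * C) * ((1/2) * (norm (x - x0))\<^sup>2)
      + \<alpha> * (- ((P *v (g - g0)) \<bullet> (x - x0))) + (1/2) * \<alpha>\<^sup>2 * (norm g)\<^sup>2"
proof -
  define e where "e = x - x0"
  have "(norm ((x - \<alpha> *\<^sub>R (P *v g)) - x0))\<^sup>2 = (norm (e - \<alpha> *\<^sub>R (P *v g)))\<^sup>2"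
    by (simp add: e_def algebra_simps)
  also have "\<dots> = (norm e)\<^sup>2 + \<alpha>\<^sup>2 * (norm g)\<^sup>2 - 2 * \<alpha> * ((P *v g) \<bullet> e)"
    using dot_norm_neg[of e "\<alpha> *\<^sub>R (P *v g)"] iso[of g]
    by (simp add: power_mult_distrib inner_commute)
  finally have sq: "(norm ((x - \<alpha> *\<^sub>R (P *v g)) - x0))\<^sup>2
      = (norm e)\<^sup>2 + \<alpha>\<^sup>2 * (norm g)\<^sup>2 - 2 * \<alpha> * ((P *v g) \<bullet> e)" .
  have split: "(P *v g) \<bullet> e = (P *v g0) \<bullet> e + (P *v (g - g0)) \<bullet> e"
    by (simp add: matrix_vector_mult_diff_distrib inner_diff_left)
  have "(1 - \<alpha> * C) * ((1/2) * (norm e)\<^sup>2) + \<alpha> * (- ((P *v (g - g0)) \<bullet> e))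
      + (1/2) * \<alpha>\<^sup>2 * (norm g)\<^sup>2 - (1/2) * (norm ((x - \<alpha> *\<^sub>R (P *v g)) - x0))\<^sup>2
    = \<alpha> * ((P *v g0) \<bullet> e - C / 2 * (norm e)\<^sup>2)"
    unfolding sq split by algebra
  moreover have "0 \<le> \<alpha> * ((P *v g0) \<bullet> e - C / 2 * (norm e)\<^sup>2)"
    using corr \<open>0 \<le> \<alpha>\<close> by (intro mult_nonneg_nonneg) (auto simp: e_def)
  ultimately show ?thesis
    unfolding e_def[symmetric] by linarith
qed

lemma (in prob_space) centered_noise_linear_functional:
  fixes G :: "'a \<Rightarrow> real^'n" and P :: "real^'n^'n"
  assumes "integrable M G" and "(\<integral>\<omega>. G \<omega> \<partial>M) = g"
  shows "integrable M (\<lambda>\<omega>. - ((P *v (G \<omega> - g)) \<bullet> e))"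
    and "(\<integral>\<omega>. - ((P *v (G \<omega> - g)) \<bullet> e) \<partial>M) = 0"
proof -
  define w where "w = e v* P"
  have "(P *v z) \<bullet> e = z \<bullet> w" for z
    by (metis w_def dot_lmul_matrix inner_commute)
  then have noise_eq: "(\<lambda>\<omega>. - ((P *v (G \<omega> - g)) \<bullet> e)) = (\<lambda>\<omega>. g \<bullet> w - G \<omega> \<bullet> w)"
    by (simp add: inner_diff_left)
  show "integrable M (\<lambda>\<omega>. - ((P *v (G \<omega> - g)) \<bullet> e))"
    unfolding noise_eq using assms(1) by (intro Bochner_Integration.integrable_diff) auto
  show "(\<integral>\<omega>. - ((P *v (G \<omega> - g)) \<bullet> e) \<partial>M) = 0"
    unfolding noise_eq using assms by (subst Bochner_Integration.integral_diff) (auto simp: prob_space)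
qed

theorem proposition4p17:
  fixes f :: "real^'d \<Rightarrow> real" and grad :: "real^'d \<Rightarrow> real^'d"
    and hess :: "real^'d \<Rightarrow> real^'d^'d"
    and xstar xn :: "real^'d" and k :: nat
    and \<delta> L \<mu> Mlip \<theta> \<alpha> :: real
    and M :: "'w measure" and G :: "real^'d \<Rightarrow> 'w \<Rightarrow> real^'d"
    and v vt :: "nat \<Rightarrow> real^'d"
  assumes f_grad: "\<forall>x. (f has_derivative (\<lambda>h. grad x \<bullet> h)) (at x)"
    and grad_hess: "\<forall>x. (grad has_derivative (\<lambda>h. hess x *v h)) (at x)"
    and hess_C1: "\<exists>D. (\<forall>x. (hess has_derivative blinfun_apply (D x)) (at x)) \<and> continuous_on UNIV D"
    and k_ge: "1 \<le> k" and k_le: "k \<le> CARD('d) - 1"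
    and crit: "grad xstar = 0"
    and \<delta>_pos: "\<delta> > 0" and \<mu>_pos: "0 < \<mu>" and \<mu>_L: "\<mu> < L" and M_pos: "Mlip > 0"
    and spec: "\<forall>x. norm (x - xstar) \<le> \<delta> \<longrightarrow>
       (\<exists>lam u. sorted_eigensystem (hess x) lam u \<and>
          (\<forall>i<k. - L < lam i \<and> lam i < - \<mu>) \<and>
          (\<forall>i. k \<le> i \<and> i < CARD('d) \<longrightarrow> \<mu> < lam i \<and> lam i < L))"
    and lip: "\<forall>x y. norm (x - xstar) \<le> \<delta> \<and> norm (y - xstar) \<le> \<delta> \<longrightarrow>
       opnorm (hess x - hess y) \<le> Mlip * norm (x - y)"
    and \<theta>_pos: "\<theta> > 0" and C_pos: "Cth \<mu> L \<theta> > 0"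
    and \<alpha>_pos: "0 < \<alpha>" and \<alpha>_le: "\<alpha> < 1 / (2 * \<mu>)"
    and P: "prob_space M"
    and unbiased: "\<forall>x. integrable M (G x) \<and> (\<integral>\<omega>. G x \<omega> \<partial>M) = grad x"
    and vt_on: "orthonormal_family k vt"
    and v_eig: "\<exists>lam u. sorted_eigensystem (hess xn) lam u \<and> (\<forall>i<k. v i = u i)"
    and close: "(opnorm ((\<Sum>i<k. outer (vt i) (vt i)) - (\<Sum>i<k. outer (v i) (v i))))\<^sup>2 \<le> \<theta>"
    and xn_U: "norm (xn - xstar) \<le> min (Cth \<mu> L \<theta> / Mlip) \<delta>"
  shows "(\<forall>\<omega>\<in>space M.
            (1/2) * (norm ((xn - \<alpha> *\<^sub>R (reflector k vt *v G xn \<omega>)) - xstar))\<^sup>2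
            \<le> (1 - \<alpha> * Cth \<mu> L \<theta>) * ((1/2) * (norm (xn - xstar))\<^sup>2)
              + \<alpha> * (- ((reflector k vt *v (G xn \<omega> - grad xn)) \<bullet> (xn - xstar)))
              + (1/2) * \<alpha>\<^sup>2 * (norm (G xn \<omega>))\<^sup>2)
         \<and> integrable M (\<lambda>\<omega>. - ((reflector k vt *v (G xn \<omega> - grad xn)) \<bullet> (xn - xstar)))
         \<and> (\<integral>\<omega>. - ((reflector k vt *v (G xn \<omega> - grad xn)) \<bullet> (xn - xstar)) \<partial>M) = 0"
proof -
  define e where "e = xn - xstar"
  define C where "C = Cth \<mu> L \<theta>"
  have e_small: "Mlip * norm e \<le> C" and e_ball: "norm e \<le> \<delta>"
    using xn_U M_pos by (auto simp: e_def C_def field_simps)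
  obtain lam u where sys: "sorted_eigensystem (hess xn) lam u" and vu: "\<forall>i<k. v i = u i"
    using v_eig by blast
  obtain lam' u' where sys': "sorted_eigensystem (hess xn) lam' u'"
    and neg: "\<forall>i<k. - L < lam' i \<and> lam' i < - \<mu>"
    and pos: "\<forall>i. k \<le> i \<and> i < CARD('d) \<longrightarrow> \<mu> < lam' i \<and> lam' i < L"
    using spec e_ball by (auto simp: e_def)
  have spectrum: "(lam i < 0 \<longleftrightarrow> i < k) \<and> \<mu> \<le> \<bar>lam i\<bar> \<and> \<bar>lam i\<bar> \<le> L" if "i < CARD('d)" for i
    using sorted_eigensystem_eigenvalues_unique[OF sys sys' that]
      neg[rule_format, of i] pos[rule_format, of i] that \<mu>_pos
    by (cases "i < k") auto
  have coercive: "(\<mu> - 2 * sqrt \<theta> * L) * (norm e)\<^sup>2 \<le> e \<bullet> (reflector k vt *v (hess xn *v e))"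
    using sys spectrum k_le real_le_rsqrt[OF close] unfolding sorted_eigensystem_def
    by (intro approximate_reflector_quadratic_form_ge[OF _ _ vu]) auto
  have "norm (grad xn - grad xstar - hess xn *v (xn - xstar)) \<le> Mlip / 2 * (norm (xn - xstar))\<^sup>2"
    using grad_hess lip e_ball \<delta>_pos
    by (intro gradient_taylor_remainder_le[where S = "cball xstar \<delta>"])
      (auto simp: e_def dist_norm norm_minus_commute)
  then have taylor: "norm (grad xn - hess xn *v e) \<le> Mlip / 2 * (norm e)\<^sup>2"
    by (simp add: crit e_def)
  have "0 \<le> sqrt \<theta> * \<mu>" "0 \<le> L * \<theta>" "0 \<le> L * sqrt \<theta>"
    using \<theta>_pos \<mu>_pos \<mu>_L by auto
  then have "C \<le> \<mu> - 2 * sqrt \<theta> * L"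
    by (simp add: C_def Cth_def algebra_simps)
  from isometry_gradient_correlation_ge[OF reflector_norm[OF vt_on] taylor e_small coercive this]
  have corr: "C / 2 * (norm (xn - xstar))\<^sup>2 \<le> (reflector k vt *v grad xn) \<bullet> (xn - xstar)"
    by (simp add: e_def)
  have noise: "integrable M (G xn)" "(\<integral>\<omega>. G xn \<omega> \<partial>M) = grad xn"
    using unbiased by auto
  show ?thesis
    using half_sq_norm_isometry_step_le[OF reflector_norm[OF vt_on] corr less_imp_le[OF \<alpha>_pos]]
      prob_space.centered_noise_linear_functional[OF P noise]
    unfolding C_def by blast
qed

end
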